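(* Let $\mathbf{a}=\langle a_1,\dots,a_s\rangle$, $\mathbf{b}=\langle b_1,\dots,b_t\rangle$ be integer vectors with $a_1+\cdots+a_s=b_1+\cdots+b_t$, let $n,m$ be positive integers, $r+1=\max(s,n+t)$, and $\delta=a_1\varepsilon_1+\cdots+a_s\varepsilon_s-(b_1\varepsilon_{n+1}+\cdots+b_t\varepsilon_{n+t})\in\mathbb{Z}^{r+1}$. Let $\mathcal{T}$ be a set of throws $T_{i,j}$ with $1\le i\le n$ and $i+j\le r+1$, and let $\Lambda=\{\varepsilon_i-\varepsilon_{i+j}:T_{i,j}\in\mathcal{T}\}$. Define \[Q_\Lambda(\delta)=\Big\{p\in P_\Lambda(\delta):\ a_j+\#\{\text{elements of }p\text{ of the form }\varepsilon_i-\varepsilon_j\}\le m\ \text{for all } j\ge1\Big\}\] (with $a_j=0$ for $j>s$, counting with multiplicity). Then $\mathrm{JS}_{\mathcal{T}}(\mathbf{a},\mathbf{b},n,m)$ is in bijection with $Q_\Lambda(\delta)$, so $\mathsf{js}_{\mathcal{T}}(\mathbf{a},\mathbf{b},n,m)=|Q_\Lambda(\delta)|$, and without hand capacity constraint $\mathsf{js}_{\mathcal{T}}(\mathbf{a},\mathbf{b},n)=K_\Lambda(\delta)$.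
   Context: A juggling state is a finitely supported integer vector $\mathbf{s}=\langle s_1,s_2,\dots\rangle$ indexed by heights (trailing zeros omitted; negative entries are magic balls). A juggling sequence of length $n$ from $\mathbf{a}$ to $\mathbf{b}$ is a sequence $(\mathbf{s}_0,\dots,\mathbf{s}_n)$ with $\mathbf{s}_0=\mathbf{a}$, $\mathbf{s}_n=\mathbf{b}$, such that for each $1\le i\le n$ there are nonnegative integers $c^{(i)}_k$ (finitely many nonzero) with $\sum_k c^{(i)}_k=(\mathbf{s}_{i-1})_1$ and $(\mathbf{s}_i)_k=(\mathbf{s}_{i-1})_{k+1}+c^{(i)}_k$ for all $k\ge1$; $c^{(i)}_j$ is the number of throws at time $i$ to height $j$, and $T_{i,j}$ denotes a throw at time $i$ to height $j$. Hand capacity $m$ means all entries of all $\mathbf{s}_i$ are $\le m$. $\mathrm{JS}_{\mathcal{T}}(\mathbf{a},\mathbf{b},n,m)$ is the set of juggling sequences with hand capacity $m$ in which $c^{(i)}_j>0$ only if $T_{i,j}\in\mathcal{T}$; $\mathsf{js}_{\mathcal{T}}$ denotes its cardinality (dropping $m$ means no capacity constraint). $\Phi^+_{A_r}=\{\varepsilon_i-\varepsilon_j:1\le i<j\le r+1\}\subset\mathbb{R}^{r+1}$; $P_\Lambda(\mu)$ is the set of finite multisets of elements of $\Lambda$ summing to $\mu$, $K_\Lambda(\mu)=|P_\Lambda(\mu)|$. *)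

theory Defs
  imports Main "HOL-Library.Multiset" "HOL-Library.Function_Algebras"
begin

(* Juggling states: functions from heights to int; height 0 is unused (value 0),
   and the support is finite. *)
definition jstate :: "(nat \<Rightarrow> int) \<Rightarrow> bool" where
  "jstate s \<longleftrightarrow> s 0 = 0 \<and> finite {k. s k \<noteq> 0}"

(* the vector <x_1,...,x_l> as a finitely supported function on heights 1.. *)
definition jvec :: "int list \<Rightarrow> nat \<Rightarrow> int" where
  "jvec xs k = (if 1 \<le> k \<and> k \<le> length xs then xs ! (k - 1) else 0)"

(* a valid transition at time i from state s to state s', with throw counts c k
   (c k = number of throws at time i to height k), only using throws in T *)
definition jstep :: "(nat \<times> nat) set \<Rightarrow> nat \<Rightarrow> (nat \<Rightarrow> int) \<Rightarrow> (nat \<Rightarrow> int) \<Rightarrow> bool" where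
  "jstep T i s s' \<longleftrightarrow>
     (\<exists>c :: nat \<Rightarrow> nat. c 0 = 0 \<and> finite {k. c k \<noteq> 0}
        \<and> int (sum c {k. c k \<noteq> 0}) = s 1
        \<and> (\<forall>k\<ge>1. s' k = s (k + 1) + int (c k))
        \<and> (\<forall>k. c k > 0 \<longrightarrow> (i, k) \<in> T))"

definition JS :: "(nat \<times> nat) set \<Rightarrow> (nat \<Rightarrow> int) \<Rightarrow> (nat \<Rightarrow> int) \<Rightarrow> nat
                   \<Rightarrow> (nat \<Rightarrow> int) list set" where
  "JS T a b n = {ss. length ss = n + 1 \<and> (\<forall>s\<in>set ss. jstate s)
                  \<and> ss ! 0 = a \<and> ss ! n = b
                  \<and> (\<forall>i\<in>{1..n}. jstep T i (ss ! (i - 1)) (ss ! i))}"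

definition JSm :: "(nat \<times> nat) set \<Rightarrow> (nat \<Rightarrow> int) \<Rightarrow> (nat \<Rightarrow> int) \<Rightarrow> nat \<Rightarrow> nat
                   \<Rightarrow> (nat \<Rightarrow> int) list set" where
  "JSm T a b n m = {ss \<in> JS T a b n. \<forall>s\<in>set ss. \<forall>k. s k \<le> int m}"

(* unit vectors epsilon_i of Z^{r+1}, vectors represented as nat => int on 1..r+1 *)
definition eps :: "nat \<Rightarrow> nat \<Rightarrow> int" where
  "eps i = (\<lambda>k. if k = i then 1 else 0)"

definition throwRoots :: "(nat \<times> nat) set \<Rightarrow> (nat \<Rightarrow> int) set" where
  "throwRoots T = {eps i - eps (i + j) | i j. (i, j) \<in> T}"

definition Ppart :: "(nat \<Rightarrow> int) set \<Rightarrow> (nat \<Rightarrow> int) \<Rightarrow> (nat \<Rightarrow> int) multiset set" where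
  "Ppart L mu = {p. set_mset p \<subseteq> L \<and> sum_mset p = mu}"

definition Kpf :: "(nat \<Rightarrow> int) set \<Rightarrow> (nat \<Rightarrow> int) \<Rightarrow> nat" where
  "Kpf L mu = card (Ppart L mu)"

definition Qpart :: "(nat \<Rightarrow> int) set \<Rightarrow> (nat \<Rightarrow> int) \<Rightarrow> int list \<Rightarrow> nat
                      \<Rightarrow> (nat \<Rightarrow> int) multiset set" where
  "Qpart L mu as m = {p \<in> Ppart L mu. \<forall>j\<ge>1.
      jvec as j + int (size (filter_mset (\<lambda>v. \<exists>i. v = eps i - eps j) p)) \<le> int m}"

definition jdelta :: "int list \<Rightarrow> int list \<Rightarrow> nat \<Rightarrow> nat \<Rightarrow> int" where
  "jdelta as bs n = (\<lambda>k. jvec as k - (if n < k then jvec bs (k - n) else 0))"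

end

theory Submission
  imports Defs
begin

(*
  A juggling sequence is determined by its multiset of throws (i, k), made at time i to
  height k: at time t, height k holds the a_(t+k) balls present initially plus the throws
  made up to time t that land at time t + k.  The transition rules then say that at each
  time i the number of throws equals a_i plus the number of throws landing at time i, and
  that the final state is b.  As the throw (i, k) contributes eps_i - eps_(i+k), and since
  a throw can only be made at a time 1..n, these conditions say exactly that the roots of
  the throws sum to delta; the root map is injective on throws of positive height.  Height k
  at time t never holds more than a_(t+k) plus the number of throws landing at time t + k,
  with equality at time t + k - 1 (or at the end), so hand capacity m is precisely the
  defining condition of Q_Lambda(delta).
*)

definition throw_root :: "nat \<times> nat \<Rightarrow> nat \<Rightarrow> int" where
  "throw_root x = eps (fst x) - eps (fst x + snd x)"

definition thrown_at :: "(nat \<times> nat) multiset \<Rightarrow> nat \<Rightarrow> nat" where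
  "thrown_at M i = size {#x \<in># M. fst x = i#}"

definition landing_at :: "(nat \<times> nat) multiset \<Rightarrow> nat \<Rightarrow> nat" where
  "landing_at M j = size {#x \<in># M. fst x + snd x = j#}"

lemma throw_root_apply:
  "throw_root x j = (if j = fst x then 1 else 0) - (if j = fst x + snd x then 1 else 0)"
  by (simp add: throw_root_def eps_def)

lemma sum_throw_roots_apply:
  "sum_mset (image_mset throw_root M) j = int (thrown_at M j) - int (landing_at M j)"
  by (induction M) (auto simp: thrown_at_def landing_at_def throw_root_apply)

lemma inj_on_throw_root: "inj_on throw_root {x. 1 \<le> snd x}"
proof (rule inj_onI)
  fix x y :: "nat \<times> nat"
  assume "x \<in> {x. 1 \<le> snd x}" "y \<in> {x. 1 \<le> snd x}" and eq: "throw_root x = throw_root y"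
  then have pos: "1 \<le> snd x" "1 \<le> snd y" by simp_all
  have "fst x = fst y"
    using fun_cong[OF eq, of "fst x"] pos by (auto simp: throw_root_apply split: if_splits)
  moreover have "snd x = snd y"
    using fun_cong[OF eq, of "fst x + snd x"] pos \<open>fst x = fst y\<close>
    by (auto simp: throw_root_apply split: if_splits)
  ultimately show "x = y" by (simp add: prod_eq_iff)
qed

lemma throw_root_lands_at:
  assumes "1 \<le> snd x"
  shows "(\<exists>i. throw_root x = eps i - eps j) \<longleftrightarrow> j = fst x + snd x"
proof
  assume "\<exists>i. throw_root x = eps i - eps j"
  then obtain i where "throw_root x = eps i - eps j" by blast
  from fun_cong[OF this, of "fst x + snd x"] assms show "j = fst x + snd x"
    by (auto simp: throw_root_apply eps_def split: if_splits)
qed (auto simp: throw_root_def)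

lemma size_filter_landing:
  assumes "\<forall>x\<in>#M. 1 \<le> snd x"
  shows "size {#v \<in># image_mset throw_root M. \<exists>i. v = eps i - eps j#} = landing_at M j"
proof -
  have "{#x \<in># M. \<exists>i. throw_root x = eps i - eps j#} = {#x \<in># M. fst x + snd x = j#}"
    using assms throw_root_lands_at by (intro filter_mset_cong) auto
  then show ?thesis
    by (simp add: filter_mset_image_mset landing_at_def)
qed

lemma thrown_at_eq_sum_count:
  "thrown_at M i = (\<Sum>k | count M (i, k) \<noteq> 0. count M (i, k))"
proof -
  have "set_mset {#x \<in># M. fst x = i#} = Pair i ` {k. count M (i, k) \<noteq> 0}"
    by (force simp: image_iff)
  then show ?thesis
    by (simp add: thrown_at_def size_multiset_overloaded_eq sum.reindex inj_on_def)
qed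

lemma bij_betw_image_mset:
  assumes "inj_on f A"
  shows "bij_betw (image_mset f) {M. set_mset M \<subseteq> A} {N. set_mset N \<subseteq> f ` A}"
proof (rule bij_betw_imageI)
  show "inj_on (image_mset f) {M. set_mset M \<subseteq> A}"
  proof (rule inj_onI)
    fix M N assume "M \<in> {M. set_mset M \<subseteq> A}" "N \<in> {M. set_mset M \<subseteq> A}"
      and "image_mset f M = image_mset f N"
    then obtain C where "M = N + C" "image_mset f C = {#}"
      using image_mset_eq_image_mset_plusD[of f M N "{#}"] inj_on_subset[OF assms] by auto
    then show "M = N" by simp
  qed
  show "image_mset f ` {M. set_mset M \<subseteq> A} = {N. set_mset N \<subseteq> f ` A}"
  proof (intro equalityI subsetI)
    fix N assume "N \<in> {N. set_mset N \<subseteq> f ` A}"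
    then have "set_mset N \<subseteq> f ` A" by simp
    then show "N \<in> image_mset f ` {M. set_mset M \<subseteq> A}"
    proof (induction N)
      case (add v N)
      then obtain M x where "N = image_mset f M" "set_mset M \<subseteq> A" "x \<in> A" "v = f x" by auto
      then have "add_mset v N = image_mset f (add_mset x M) \<and> set_mset (add_mset x M) \<subseteq> A"
        by simp
      then show ?case by blast
    qed simp
  qed fastforce
qed

lemma throwRoots_eq_image: "throwRoots T = throw_root ` T"
  by (force simp: throwRoots_def throw_root_def image_iff)

lemma jstate_jvec: "jstate (jvec xs)"
  unfolding jstate_def by (auto simp: jvec_def intro: finite_subset[of _ "{1..length xs}"])

definition state_after :: "(nat \<Rightarrow> int) \<Rightarrow> (nat \<times> nat) multiset \<Rightarrow> nat \<Rightarrow> nat \<Rightarrow> int" where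
  "state_after a M t k =
     (if k = 0 then 0 else a (t + k) + int (size {#x \<in># M. fst x \<le> t \<and> fst x + snd x = t + k#}))"

definition throw_sequence :: "(nat \<Rightarrow> int) \<Rightarrow> (nat \<times> nat) multiset \<Rightarrow> nat \<Rightarrow> (nat \<Rightarrow> int) list" where
  "throw_sequence a M n = map (state_after a M) [0..<n + 1]"

lemma length_throw_sequence [simp]: "length (throw_sequence a M n) = n + 1"
  by (simp add: throw_sequence_def)

lemma nth_throw_sequence [simp]: "t \<le> n \<Longrightarrow> throw_sequence a M n ! t = state_after a M t"
  by (simp add: throw_sequence_def nth_map less_Suc_eq_le del: upt_Suc)

lemma set_throw_sequence: "set (throw_sequence a M n) = state_after a M ` {..n}"
  by (auto simp: throw_sequence_def image_iff less_Suc_eq_le simp del: upt_Suc)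

lemma state_after_0:
  assumes "a 0 = 0" and "\<forall>x\<in>#M. 1 \<le> fst x"
  shows "state_after a M 0 = a"
proof
  fix k
  have "{#x \<in># M. fst x \<le> 0 \<and> fst x + snd x = k#} = {#}"
    using assms(2) by (auto simp: filter_mset_eq_conv)
  then show "state_after a M 0 k = a k"
    using assms(1) by (simp add: state_after_def)
qed

lemma state_after_Suc:
  assumes "1 \<le> k"
  shows "state_after a M (Suc t) k = state_after a M t (Suc k) + int (count M (Suc t, k))"
proof -
  have "size {#x \<in># M. fst x \<le> Suc t \<and> fst x + snd x = Suc t + k#}
      = size {#x \<in># M. fst x \<le> t \<and> fst x + snd x = t + Suc k#} + count M (Suc t, k)"
    by (induction M) (auto simp: prod_eq_iff)
  then show ?thesis
    using assms by (simp add: state_after_def)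
qed

lemma count_eq_state_difference:
  "1 \<le> k \<Longrightarrow> int (count M (Suc t, k)) = state_after a M (Suc t) k - state_after a M t (Suc k)"
  using state_after_Suc[of k a M t] by simp

lemma jstate_state_after:
  assumes "jstate a"
  shows "jstate (state_after a M t)"
proof -
  have "{k. state_after a M t k \<noteq> 0}
      \<subseteq> (\<lambda>j. j - t) ` {j. a j \<noteq> 0} \<union> (\<lambda>x. fst x + snd x - t) ` set_mset M"
  proof
    fix k assume "k \<in> {k. state_after a M t k \<noteq> 0}"
    then have "a (t + k) \<noteq> 0 \<or> size {#x \<in># M. fst x \<le> t \<and> fst x + snd x = t + k#} \<noteq> 0"
      by (auto simp: state_after_def split: if_splits)
    then show "k \<in> (\<lambda>j. j - t) ` {j. a j \<noteq> 0} \<union> (\<lambda>x. fst x + snd x - t) ` set_mset M"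
    proof
      assume "a (t + k) \<noteq> 0"
      then show ?thesis by (auto intro!: image_eqI[of _ _ "t + k"])
    next
      assume "size {#x \<in># M. fst x \<le> t \<and> fst x + snd x = t + k#} \<noteq> 0"
      then obtain x where "x \<in># M" "fst x + snd x = t + k"
        by (auto simp: size_eq_0_iff_empty filter_mset_eq_conv)
      then show ?thesis by (auto intro!: image_eqI[of _ _ x])
    qed
  qed
  moreover have "finite {j. a j \<noteq> 0}" using assms by (simp add: jstate_def)
  ultimately have "finite {k. state_after a M t k \<noteq> 0}"
    by (auto intro: finite_subset)
  then show ?thesis
    unfolding jstate_def by (simp add: state_after_def[of _ _ _ 0])
qed

lemma state_after_le_landing:
  assumes "1 \<le> k"
  shows "state_after a M t k \<le> a (t + k) + int (landing_at M (t + k))"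
proof -
  have "size {#x \<in># M. fst x \<le> t \<and> fst x + snd x = t + k#} \<le> landing_at M (t + k)"
    unfolding landing_at_def by (intro size_mset_mono filter_mset_mono_strong) auto
  then show ?thesis
    using assms by (simp add: state_after_def)
qed

locale throw_set =
  fixes n :: nat and T :: "(nat \<times> nat) set"
  assumes finite_T: "finite T"
    and throw_bounds: "(i, k) \<in> T \<Longrightarrow> 1 \<le> i \<and> i \<le> n \<and> 1 \<le> k"
begin

definition juggling_throws :: "(nat \<Rightarrow> int) \<Rightarrow> (nat \<Rightarrow> int) \<Rightarrow> (nat \<times> nat) multiset set" where
  "juggling_throws a b = {M. set_mset M \<subseteq> T
     \<and> (\<forall>i\<in>{1..n}. int (thrown_at M i) = state_after a M (i - 1) 1)
     \<and> (\<forall>k\<ge>1. state_after a M n k = b k)}"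

definition shifted_difference :: "(nat \<Rightarrow> int) \<Rightarrow> (nat \<Rightarrow> int) \<Rightarrow> nat \<Rightarrow> int" where
  "shifted_difference a b x = a x - (if n < x then b (x - n) else 0)"

lemma throws_in_T:
  assumes "set_mset M \<subseteq> T" "x \<in># M"
  shows "1 \<le> fst x" "fst x \<le> n" "1 \<le> snd x"
  using assms throw_bounds[of "fst x" "snd x"] by auto

lemma thrown_at_outside:
  assumes "set_mset M \<subseteq> T" "\<not> (1 \<le> i \<and> i \<le> n)"
  shows "thrown_at M i = 0"
  using assms throws_in_T[OF assms(1)] by (force simp: thrown_at_def size_eq_0_iff_empty)

lemma state_after_eq_landing:
  assumes "set_mset M \<subseteq> T" "t < j" "Suc t = j \<or> n \<le> t"
  shows "state_after a M t (j - t) = a j + int (landing_at M j)"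
proof -
  have "{#x \<in># M. fst x \<le> t \<and> fst x + snd x = j#} = {#x \<in># M. fst x + snd x = j#}"
    using assms throws_in_T[OF assms(1)] by (intro filter_mset_cong) fastforce+
  then show ?thesis
    using assms(2) by (simp add: state_after_def landing_at_def)
qed

lemma state_after_bounded_iff:
  assumes "set_mset M \<subseteq> T"
  shows "(\<forall>t\<le>n. \<forall>k. state_after a M t k \<le> int m) \<longleftrightarrow> (\<forall>j\<ge>1. a j + int (landing_at M j) \<le> int m)"
proof
  assume bounded: "\<forall>t\<le>n. \<forall>k. state_after a M t k \<le> int m"
  show "\<forall>j\<ge>1. a j + int (landing_at M j) \<le> int m"
  proof (intro allI impI)
    fix j :: nat assume "1 \<le> j"
    define t where "t = min (j - 1) n"
    have t: "t \<le> n" "t < j" "Suc t = j \<or> n \<le> t"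
      using \<open>1 \<le> j\<close> by (auto simp: t_def min_def)
    have "state_after a M t (j - t) \<le> int m"
      using bounded t(1) by blast
    then show "a j + int (landing_at M j) \<le> int m"
      using state_after_eq_landing[OF assms t(2,3), where a = a] by simp
  qed
next
  assume bounded: "\<forall>j\<ge>1. a j + int (landing_at M j) \<le> int m"
  show "\<forall>t\<le>n. \<forall>k. state_after a M t k \<le> int m"
  proof (intro allI impI)
    fix t k :: nat
    show "state_after a M t k \<le> int m"
    proof (cases "k = 0")
      case False
      then show ?thesis
        using state_after_le_landing[of k a M t] bounded[rule_format, of "t + k"] by simp
    qed (simp add: state_after_def)
  qed
qed

lemma juggling_throws_iff_sum:
  assumes "set_mset M \<subseteq> T" "a 0 = 0"
  shows "M \<in> juggling_throws a b \<longleftrightarrow>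
    sum_mset (image_mset throw_root M) = shifted_difference a b"
proof -
  let ?\<sigma> = "sum_mset (image_mset throw_root M)" and ?\<delta> = "shifted_difference a b"
  have at_0: "?\<sigma> 0 = ?\<delta> 0"
    using sum_throw_roots_apply[of M 0] thrown_at_outside[OF assms(1), of 0] assms(2)
      throws_in_T[OF assms(1)]
    by (force simp: shifted_difference_def landing_at_def size_eq_0_iff_empty)
  have at_time: "?\<sigma> i = ?\<delta> i \<longleftrightarrow> int (thrown_at M i) = state_after a M (i - 1) 1"
    if "1 \<le> i" "i \<le> n" for i
    using sum_throw_roots_apply[of M i] state_after_eq_landing[OF assms(1), of "i - 1" i] that
    by (auto simp: shifted_difference_def)
  have at_end: "?\<sigma> (n + k) = ?\<delta> (n + k) \<longleftrightarrow> state_after a M n k = b k" if "1 \<le> k" for k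
    using sum_throw_roots_apply[of M "n + k"] state_after_eq_landing[OF assms(1), of n "n + k"]
      thrown_at_outside[OF assms(1), of "n + k"] that
    by (auto simp: shifted_difference_def)
  have "(\<forall>x. ?\<sigma> x = ?\<delta> x) \<longleftrightarrow>
      (\<forall>i. 1 \<le> i \<and> i \<le> n \<longrightarrow> ?\<sigma> i = ?\<delta> i) \<and> (\<forall>k\<ge>1. ?\<sigma> (n + k) = ?\<delta> (n + k))"
  proof (intro iffI allI)
    fix x assume h: "(\<forall>i. 1 \<le> i \<and> i \<le> n \<longrightarrow> ?\<sigma> i = ?\<delta> i) \<and> (\<forall>k\<ge>1. ?\<sigma> (n + k) = ?\<delta> (n + k))"
    consider "x = 0" | "1 \<le> x" "x \<le> n" | "n < x"
      by linarith
    then show "?\<sigma> x = ?\<delta> x"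
      by cases (use at_0 h[THEN conjunct2, rule_format, of "x - n"] h in auto)
  qed auto
  also have "\<dots> \<longleftrightarrow> (\<forall>i\<in>{1..n}. int (thrown_at M i) = state_after a M (i - 1) 1)
      \<and> (\<forall>k\<ge>1. state_after a M n k = b k)"
    using at_time at_end by auto
  finally show ?thesis
    using assms(1) by (simp add: juggling_throws_def fun_eq_iff)
qed

lemma jstep_state_after:
  assumes "set_mset M \<subseteq> T" "1 \<le> i" "int (thrown_at M i) = state_after a M (i - 1) 1"
  shows "jstep T i (state_after a M (i - 1)) (state_after a M i)"
  unfolding jstep_def
proof (intro exI[of _ "\<lambda>k. count M (i, k)"] conjI allI impI)
  show "count M (i, 0) = 0"
    using throws_in_T[OF assms(1), of "(i, 0)"] by (auto simp: count_eq_zero_iff)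
  show "finite {k. count M (i, k) \<noteq> 0}"
    by (rule finite_subset[of _ "snd ` set_mset M"]) (force simp: image_iff)+
  show "int (\<Sum>k | count M (i, k) \<noteq> 0. count M (i, k)) = state_after a M (i - 1) 1"
    using assms(3) by (simp add: thrown_at_eq_sum_count)
  fix k
  show "1 \<le> k \<Longrightarrow> state_after a M i k = state_after a M (i - 1) (k + 1) + int (count M (i, k))"
    using state_after_Suc[of k a M "i - 1"] assms(2) by simp
  show "0 < count M (i, k) \<Longrightarrow> (i, k) \<in> T"
    using assms(1) by (auto simp: count_greater_zero_iff)
qed

lemma throw_sequence_in_JS:
  assumes "jstate a" "jstate b" "M \<in> juggling_throws a b"
  shows "throw_sequence a M n \<in> JS T a b n"
proof -
  have M: "set_mset M \<subseteq> T" "\<forall>i\<in>{1..n}. int (thrown_at M i) = state_after a M (i - 1) 1"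
      "\<forall>k\<ge>1. state_after a M n k = b k"
    using assms(3) by (auto simp: juggling_throws_def)
  have "state_after a M 0 = a"
    using assms(1) throws_in_T[OF M(1)] by (intro state_after_0) (auto simp: jstate_def)
  moreover have "state_after a M n = b"
  proof
    fix k show "state_after a M n k = b k"
      using M(3) assms(2) by (cases "k = 0") (auto simp: jstate_def state_after_def)
  qed
  moreover have "jstep T i (state_after a M (i - 1)) (state_after a M i)" if "i \<in> {1..n}" for i
    using that M by (intro jstep_state_after) auto
  ultimately show ?thesis
    using assms(1) by (auto simp: JS_def set_throw_sequence jstate_state_after)
qed

lemma inj_on_throw_sequence: "inj_on (\<lambda>M. throw_sequence a M n) (juggling_throws a b)"
proof (rule inj_onI)
  fix M N assume "M \<in> juggling_throws a b" "N \<in> juggling_throws a b"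
    and eq: "throw_sequence a M n = throw_sequence a N n"
  then have T: "set_mset M \<subseteq> T" "set_mset N \<subseteq> T"
    by (auto simp: juggling_throws_def)
  have states: "state_after a M t = state_after a N t" if "t \<le> n" for t
    using arg_cong[OF eq, of "\<lambda>ss. ss ! t"] that by simp
  show "M = N"
  proof (rule multiset_eqI)
    fix x :: "nat \<times> nat"
    show "count M x = count N x"
    proof (cases "x \<in> T")
      case True
      then obtain t k where x: "x = (Suc t, k)" "t < n" "1 \<le> k"
        using throw_bounds[of "fst x" "snd x"] by (cases x; cases "fst x") auto
      show ?thesis
        using count_eq_state_difference[OF x(3), of M t a] count_eq_state_difference[OF x(3), of N t a]
          states[of t] states[of "Suc t"] x by simp
    next
      case False
      then have "x \<notin># M" "x \<notin># N"
        using T by auto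
      then show ?thesis
        by (simp add: not_in_iff)
    qed
  qed
qed

lemma JS_throw_multiset:
  assumes "ss \<in> JS T a b n"
  obtains M where "set_mset M \<subseteq> T"
    and "\<And>i k. i \<in> {1..n} \<Longrightarrow> 1 \<le> k \<Longrightarrow> (ss ! i) k = (ss ! (i - 1)) (Suc k) + int (count M (i, k))"
    and "\<And>i. i \<in> {1..n} \<Longrightarrow> int (thrown_at M i) = (ss ! (i - 1)) 1"
proof -
  define c where "c x = nat ((ss ! fst x) (snd x) - (ss ! (fst x - 1)) (Suc (snd x)))" for x
  define M where "M = (\<Sum>x\<in>T. replicate_mset (c x) x)"
  have count_M: "count M x = (if x \<in> T then c x else 0)" for x
    using finite_T by (simp add: M_def count_sum count_replicate_mset)
  have steps: "\<exists>d. (\<lambda>k. count M (i, k)) = d \<and> int (\<Sum>k | d k \<noteq> 0. d k) = (ss ! (i - 1)) 1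
      \<and> (\<forall>k\<ge>1. (ss ! i) k = (ss ! (i - 1)) (k + 1) + int (d k))" if i: "i \<in> {1..n}" for i
  proof -
    obtain d where d: "d 0 = 0" "int (\<Sum>k | d k \<noteq> 0. d k) = (ss ! (i - 1)) 1"
        "\<forall>k\<ge>1. (ss ! i) k = (ss ! (i - 1)) (k + 1) + int (d k)" "\<forall>k. 0 < d k \<longrightarrow> (i, k) \<in> T"
      using assms i unfolding JS_def jstep_def by blast
    have "count M (i, k) = d k" for k
    proof (cases "k = 0")
      case True
      then show ?thesis
        using throw_bounds[of i 0] d(1) by (auto simp: count_M)
    next
      case False
      then have "c (i, k) = d k"
        using d(3) by (simp add: c_def)
      then show ?thesis
        using d(4) by (auto simp: count_M)
    qed
    then show ?thesis
      using d(2,3) by blast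
  qed
  show ?thesis
  proof
    show "set_mset M \<subseteq> T"
      by (auto simp: count_M simp flip: count_greater_zero_iff split: if_splits)
  next
    fix i k :: nat assume "i \<in> {1..n}" "1 \<le> k"
    then show "(ss ! i) k = (ss ! (i - 1)) (Suc k) + int (count M (i, k))"
      using steps by fastforce
  next
    fix i assume "i \<in> {1..n}"
    then show "int (thrown_at M i) = (ss ! (i - 1)) 1"
      using steps thrown_at_eq_sum_count by metis
  qed
qed

lemma JS_eq_throw_sequence:
  assumes "jstate a" "ss \<in> JS T a b n"
  shows "\<exists>M\<in>juggling_throws a b. ss = throw_sequence a M n"
proof -
  obtain M where M: "set_mset M \<subseteq> T"
    and step: "\<And>i k. i \<in> {1..n} \<Longrightarrow> 1 \<le> k \<Longrightarrow> (ss ! i) k = (ss ! (i - 1)) (Suc k) + int (count M (i, k))"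
    and thrown: "\<And>i. i \<in> {1..n} \<Longrightarrow> int (thrown_at M i) = (ss ! (i - 1)) 1"
    using JS_throw_multiset[OF assms(2)] by blast
  have ss: "length ss = n + 1" "\<forall>s\<in>set ss. jstate s" "ss ! 0 = a" "ss ! n = b"
    using assms(2) by (auto simp: JS_def)
  have states: "ss ! t = state_after a M t" if "t \<le> n" for t
    using that
  proof (induction t)
    case 0
    show ?case
      using ss(3) assms(1) throws_in_T[OF M] by (simp add: state_after_0 jstate_def)
  next
    case (Suc t)
    have "(ss ! Suc t) 0 = 0"
      using ss(1,2) Suc.prems by (simp add: jstate_def)
    show ?case
    proof
      fix k
      show "(ss ! Suc t) k = state_after a M (Suc t) k"
      proof (cases "k = 0")
        case True
        then show ?thesis
          using \<open>(ss ! Suc t) 0 = 0\<close> by (simp add: state_after_def)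
      next
        case False
        then show ?thesis
          using Suc step[of "Suc t" k] state_after_Suc[of k a M t] by simp
      qed
    qed
  qed
  have "ss = throw_sequence a M n"
    using ss(1) states by (intro nth_equalityI) auto
  moreover have "M \<in> juggling_throws a b"
    using M thrown states ss(4) by (auto simp: juggling_throws_def)
  ultimately show ?thesis
    by blast
qed

lemma bij_betw_throw_sequence:
  assumes "jstate a" "jstate b"
  shows "bij_betw (\<lambda>M. throw_sequence a M n) (juggling_throws a b) (JS T a b n)"
proof (rule bij_betw_imageI)
  show "inj_on (\<lambda>M. throw_sequence a M n) (juggling_throws a b)"
    by (rule inj_on_throw_sequence)
  show "(\<lambda>M. throw_sequence a M n) ` juggling_throws a b = JS T a b n"
    using throw_sequence_in_JS[OF assms] JS_eq_throw_sequence[OF assms(1)] by blast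
qed

lemma bij_betw_throw_roots:
  assumes "a 0 = 0"
  shows "bij_betw (image_mset throw_root) (juggling_throws a b)
           (Ppart (throwRoots T) (shifted_difference a b))"
proof -
  have "T \<subseteq> {x. 1 \<le> snd x}"
    using throw_bounds by force
  then have "inj_on throw_root T"
    by (rule inj_on_subset[OF inj_on_throw_root])
  then have "bij_betw (image_mset throw_root)
      {M \<in> {M. set_mset M \<subseteq> T}. sum_mset (image_mset throw_root M) = shifted_difference a b}
      {N \<in> {N. set_mset N \<subseteq> throw_root ` T}. sum_mset N = shifted_difference a b}"
    by (intro bij_betw_Collect bij_betw_image_mset) auto
  moreover have "juggling_throws a b
      = {M \<in> {M. set_mset M \<subseteq> T}. sum_mset (image_mset throw_root M) = shifted_difference a b}"
    using juggling_throws_iff_sum[where a = a and b = b] assms by (auto simp: juggling_throws_def)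
  ultimately show ?thesis
    by (simp add: Ppart_def throwRoots_eq_image)
qed

lemma throw_sequence_bounded_iff:
  assumes "M \<in> juggling_throws a b"
  shows "(\<forall>s\<in>set (throw_sequence a M n). \<forall>k. s k \<le> int m) \<longleftrightarrow>
    (\<forall>j\<ge>1. a j + int (size {#v \<in># image_mset throw_root M. \<exists>i. v = eps i - eps j#}) \<le> int m)"
proof -
  have T: "set_mset M \<subseteq> T"
    using assms by (simp add: juggling_throws_def)
  then have "\<forall>x\<in>#M. 1 \<le> snd x"
    using throws_in_T by blast
  then show ?thesis
    using state_after_bounded_iff[OF T, of a m]
    by (auto simp: set_throw_sequence size_filter_landing)
qed

lemma bij_betw_JS_Ppart:
  assumes "jstate a" "jstate b"
  obtains h where "bij_betw h (JS T a b n) (Ppart (throwRoots T) (shifted_difference a b))"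
    and "bij_betw h (JSm T a b n m) {p \<in> Ppart (throwRoots T) (shifted_difference a b).
           \<forall>j\<ge>1. a j + int (size {#v \<in># p. \<exists>i. v = eps i - eps j#}) \<le> int m}"
proof -
  let ?seq = "\<lambda>M. throw_sequence a M n"
  let ?throws = "inv_into (juggling_throws a b) ?seq"
  have seq: "bij_betw ?seq (juggling_throws a b) (JS T a b n)"
    using bij_betw_throw_sequence[OF assms] .
  have h: "bij_betw (image_mset throw_root \<circ> ?throws) (JS T a b n)
      (Ppart (throwRoots T) (shifted_difference a b))"
    using assms(1) by (intro bij_betw_trans[OF bij_betw_inv_into[OF seq]] bij_betw_throw_roots)
      (simp add: jstate_def)
  moreover have "bij_betw (image_mset throw_root \<circ> ?throws) (JSm T a b n m)
      {p \<in> Ppart (throwRoots T) (shifted_difference a b).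
         \<forall>j\<ge>1. a j + int (size {#v \<in># p. \<exists>i. v = eps i - eps j#}) \<le> int m}"
    unfolding JSm_def
  proof (rule bij_betw_Collect[OF h])
    fix ss assume ss: "ss \<in> JS T a b n"
    have "?throws ss \<in> juggling_throws a b"
      by (rule bij_betw_apply[OF bij_betw_inv_into[OF seq] ss])
    moreover have "?seq (?throws ss) = ss"
      by (rule bij_betw_inv_into_right[OF seq ss])
    ultimately show "(\<forall>j\<ge>1. a j + int (size {#v \<in># (image_mset throw_root \<circ> ?throws) ss. \<exists>i. v = eps i - eps j#}) \<le> int m)
        \<longleftrightarrow> (\<forall>s\<in>set ss. \<forall>k. s k \<le> int m)"
      using throw_sequence_bounded_iff[of "?throws ss" a b m] by simp
  qed
  ultimately show ?thesis
    using that by blast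
qed

end

theorem mainTheorem8:
  fixes as bs :: "int list" and n m :: nat and T :: "(nat \<times> nat) set"
  assumes "sum_list as = sum_list bs"
    and "n \<ge> 1" and "m \<ge> 1"
    and "T \<subseteq> {(i, j). 1 \<le> i \<and> i \<le> n \<and> 1 \<le> j \<and> i + j \<le> max (length as) (n + length bs)}"
  shows "(\<exists>f. bij_betw f (JSm T (jvec as) (jvec bs) n m)
                         (Qpart (throwRoots T) (jdelta as bs n) as m))
       \<and> card (JSm T (jvec as) (jvec bs) n m) = card (Qpart (throwRoots T) (jdelta as bs n) as m)
       \<and> card (JS T (jvec as) (jvec bs) n) = Kpf (throwRoots T) (jdelta as bs n)"
proof -
  have "T \<subseteq> {1..n} \<times> {1..max (length as) (n + length bs)}"
    using assms(4) by auto
  then have "finite T"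
    by (rule finite_subset) simp
  then interpret throw_set n T
    using assms(4) by unfold_locales auto
  have "jdelta as bs n = shifted_difference (jvec as) (jvec bs)"
    by (simp add: fun_eq_iff jdelta_def shifted_difference_def)
  then obtain h where
    "bij_betw h (JS T (jvec as) (jvec bs) n) (Ppart (throwRoots T) (jdelta as bs n))"
    "bij_betw h (JSm T (jvec as) (jvec bs) n m) (Qpart (throwRoots T) (jdelta as bs n) as m)"
    using bij_betw_JS_Ppart[OF jstate_jvec jstate_jvec, where m = m] by (auto simp: Qpart_def)
  then show ?thesis
    by (auto simp: Kpf_def bij_betw_same_card)
qed

end
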